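(* Let $n,p$ be positive integers, $X\in\mathbb{R}^{n\times p}$, $\mathbf y\in\mathbb{R}^n$ and $\delta>0$, and let $\mathbf t\in[0,1)^p$. Then \[ (L_{\mathbf t})_{+}=\frac1n\left[(T_{\mathbf t})_{+}(X^\top X)_{+}(T_{\mathbf t})_{+}+\delta\big(I-(T_{\mathbf t})_{+}^2\big)\right]. \] Furthermore: (i) $(L_{\mathbf t}^{-1})_0=\frac{n}{\delta}I$ and $(L_{\mathbf t}^{-1})_{+}=\big((L_{\mathbf t})_{+}\big)^{-1}$; (ii) $(\widetilde{\boldsymbol\beta}_{\mathbf t})_0=\mathbf 0$ and $(\widetilde{\boldsymbol\beta}_{\mathbf t})_{+}=\big((L_{\mathbf t})_{+}\big)^{-1}\left((\mathbf t)_{+}\odot\left(\frac{X^\top\mathbf y}{n}\right)_{+}\right)$; (iii) $(\mathbf c_{\mathbf t})_0=\mathbf 0$ and $(\mathbf c_{\mathbf t})_{+}=\big((L_{\mathbf t})_{+}\big)^{-1}\big((\mathbf t)_{+}\odot(\mathbf a_{\mathbf t})_{+}\big)$.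
   Context: For $\mathbf t\in[0,1)^p$, $T_{\mathbf t}=\mathrm{Diag}(t_1,\dots,t_p)$, $X_{\mathbf t}=XT_{\mathbf t}$, $L_{\mathbf t}=\frac1n[X_{\mathbf t}^\top X_{\mathbf t}+\delta(I-T_{\mathbf t}^2)]$ (invertible for such $\mathbf t$), $\widetilde{\boldsymbol\beta}_{\mathbf t}=L_{\mathbf t}^{-1}(X_{\mathbf t}^\top\mathbf y/n)$, $\mathbf a_{\mathbf t}=\frac{X^\top X}{n}(\mathbf t\odot\widetilde{\boldsymbol\beta}_{\mathbf t})-\frac{X^\top\mathbf y}{n}$ and $\mathbf c_{\mathbf t}=L_{\mathbf t}^{-1}(\mathbf t\odot\mathbf a_{\mathbf t})$, where $\odot$ is the element-wise product and $I$ denotes an identity matrix of the appropriate size. Let $\mathscr P=\{1,\dots,p\}$ and $\mathscr Z_{\mathbf t}=\{j\in\mathscr P: t_j=0\}$. For $\mathbf u\in\mathbb{R}^p$, $(\mathbf u)_{+}$ (resp. $(\mathbf u)_0$) is the vector obtained by deleting the entries with indices in $\mathscr Z_{\mathbf t}$ (resp. in $\mathscr P\setminus\mathscr Z_{\mathbf t}$). For a $p\times p$ matrix $A$, $(A)_{+}$ (resp. $(A)_0$) is the matrix obtained by deleting the rows and columns with indices in $\mathscr Z_{\mathbf t}$ (resp. in $\mathscr P\setminus\mathscr Z_{\mathbf t}$). *)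

theory Defs
  imports Complex_Main "Jordan_Normal_Form.Matrix" "Jordan_Normal_Form.DL_Submatrix"
begin

(* Matrices/vectors are Jordan_Normal_Form 'real mat' / 'real vec', indices start at 0. *)

(* inverse of a square matrix (meaningful when it is invertible) *)
definition minv :: "real mat \<Rightarrow> real mat" where
  "minv A = (THE B. B \<in> carrier_mat (dim_row A) (dim_row A) \<and>
                    A * B = 1\<^sub>m (dim_row A) \<and> B * A = 1\<^sub>m (dim_row A))"

definition subvec :: "'a vec \<Rightarrow> nat set \<Rightarrow> 'a vec" where
  "subvec v I = vec (card {i. i < dim_vec v \<and> i \<in> I}) (\<lambda>i. v $ pick I i)"

definition hadamard :: "real vec \<Rightarrow> real vec \<Rightarrow> real vec" (infixl "\<odot>" 70) where
  "u \<odot> v = vec (dim_vec u) (\<lambda>i. u $ i * v $ i)"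

definition Tmat :: "real vec \<Rightarrow> real mat" where
  "Tmat t = mat (dim_vec t) (dim_vec t) (\<lambda>(i,j). if i = j then t $ i else 0)"

definition Xmat :: "real mat \<Rightarrow> real vec \<Rightarrow> real mat" where
  "Xmat X t = X * Tmat t"

definition Lmat :: "real mat \<Rightarrow> real \<Rightarrow> real vec \<Rightarrow> real mat" where
  "Lmat X \<delta> t = (1 / real (dim_row X)) \<cdot>\<^sub>m
     (transpose_mat (Xmat X t) * Xmat X t +
      \<delta> \<cdot>\<^sub>m (1\<^sub>m (dim_vec t) - Tmat t * Tmat t))"

definition betat :: "real mat \<Rightarrow> real vec \<Rightarrow> real \<Rightarrow> real vec \<Rightarrow> real vec" where
  "betat X y \<delta> t = minv (Lmat X \<delta> t) *\<^sub>v
     ((1 / real (dim_row X)) \<cdot>\<^sub>v (transpose_mat (Xmat X t) *\<^sub>v y))"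

definition avec :: "real mat \<Rightarrow> real vec \<Rightarrow> real \<Rightarrow> real vec \<Rightarrow> real vec" where
  "avec X y \<delta> t = ((1 / real (dim_row X)) \<cdot>\<^sub>m (transpose_mat X * X)) *\<^sub>v (t \<odot> betat X y \<delta> t)
                    - (1 / real (dim_row X)) \<cdot>\<^sub>v (transpose_mat X *\<^sub>v y)"

definition cvec :: "real mat \<Rightarrow> real vec \<Rightarrow> real \<Rightarrow> real vec \<Rightarrow> real vec" where
  "cvec X y \<delta> t = minv (Lmat X \<delta> t) *\<^sub>v (t \<odot> avec X y \<delta> t)"

definition Zset :: "real vec \<Rightarrow> nat set" where
  "Zset t = {j. j < dim_vec t \<and> t $ j = 0}"

definition Pset :: "real vec \<Rightarrow> nat set" where
  "Pset t = {j. j < dim_vec t \<and> t $ j \<noteq> 0}"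

end

theory Submission
  imports Defs "Jordan_Normal_Form.Determinant"
begin

(* If t_j = 0 then the j-th row and column of T_t X^T X T_t vanish, so row and column j of L_t
   are those of (delta/n) I. Such a scalar block on Z_t is inherited by the inverse (with value
   n/delta) and decouples the coordinates in Z_t from the others; hence the P-block of L_t^{-1} is
   the inverse of the P-block of L_t, and L_t^{-1} maps a vector of the form t \<odot> w, which vanishes
   on Z_t, to one that vanishes on Z_t. L_t is invertible because
   n v^T L_t v = |X T_t v|^2 + delta \<Sum>_j (1 - t_j^2) v_j^2 > 0 for v \<noteq> 0. *)


lemma bij_betw_pick:
  assumes "finite I"
  shows "bij_betw (pick I) {..<card I} I"
proof (rule bij_betw_imageI)
  show "inj_on (pick I) {..<card I}"
    by (intro strict_mono_on_imp_inj_on strict_mono_onI pick_mono) auto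
  show "pick I ` {..<card I} = I"
  proof (intro equalityI subsetI)
    fix x assume "x \<in> pick I ` {..<card I}"
    then obtain i where "i < card I" and "x = pick I i" by blast
    then show "x \<in> I" by (simp add: pick_in_set)
  next
    fix x assume x: "x \<in> I"
    have "card {a \<in> I. a < x} < card I"
      using assms x by (intro psubset_card_mono) auto
    then show "x \<in> pick I ` {..<card I}"
      by (intro image_eqI[of _ _ "card {a \<in> I. a < x}"]) (simp_all add: pick_card_in_set[OF x])
  qed
qed

lemma pick_less:
  assumes "I \<subseteq> {..<p}" and "i < card I"
  shows "pick I i < p"
proof -
  have "pick I i \<in> I" using assms(2) by (simp add: pick_in_set)
  then show ?thesis using assms(1) by auto
qed

lemma pick_eq_pick_iff:
  assumes "finite I" and "i < card I" and "j < card I"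
  shows "pick I i = pick I j \<longleftrightarrow> i = j"
  using inj_on_eq_iff[OF bij_betw_imp_inj_on[OF bij_betw_pick[OF assms(1)]]] assms(2,3) by simp

lemma sum_lessThan_eq_sum_pick:
  assumes I: "I \<subseteq> {..<p}" and f: "\<And>k. k < p \<Longrightarrow> k \<notin> I \<Longrightarrow> f k = 0"
  shows "(\<Sum>k<p. f k) = (\<Sum>l<card I. f (pick I l))"
proof -
  have "finite I" using I finite_subset by blast
  have "(\<Sum>k<p. f k) = (\<Sum>k\<in>I. f k)"
    using I f by (intro sum.mono_neutral_right) auto
  also have "\<dots> = (\<Sum>l<card I. f (pick I l))"
    by (rule sum.reindex_bij_betw[OF bij_betw_pick[OF \<open>finite I\<close>], symmetric])
  finally show ?thesis .
qed

lemma Collect_less_mem_eq: "I \<subseteq> {..<p} \<Longrightarrow> {i. i < p \<and> i \<in> I} = I"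
  by auto

lemma submatrix_carrier_mat:
  assumes "A \<in> carrier_mat p p" and "I \<subseteq> {..<p}"
  shows "submatrix A I I \<in> carrier_mat (card I) (card I)"
  using assms by (intro carrier_matI) (simp_all add: dim_submatrix Collect_less_mem_eq)

lemma index_submatrix_pick:
  assumes "A \<in> carrier_mat p p" and "I \<subseteq> {..<p}" and "i < card I" and "j < card I"
  shows "submatrix A I I $$ (i,j) = A $$ (pick I i, pick I j)"
  using assms by (intro submatrix_index) (auto simp: Collect_less_mem_eq)

lemma subvec_carrier_vec:
  assumes "v \<in> carrier_vec p" and "I \<subseteq> {..<p}"
  shows "subvec v I \<in> carrier_vec (card I)"
  using assms by (intro carrier_vecI) (simp add: subvec_def Collect_less_mem_eq)

lemma index_subvec_pick:
  assumes "v \<in> carrier_vec p" and "I \<subseteq> {..<p}" and "i < card I"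
  shows "subvec v I $ i = v $ pick I i"
  using assms by (simp add: subvec_def Collect_less_mem_eq)

lemma subvec_hadamard:
  assumes "dim_vec w = dim_vec v"
  shows "subvec (v \<odot> w) I = subvec v I \<odot> subvec w I"
proof (rule eq_vecI)
  fix i assume "i < dim_vec (subvec v I \<odot> subvec w I)"
  then have "i < card {k. k < dim_vec v \<and> k \<in> I}"
    by (simp add: subvec_def hadamard_def)
  with assms show "subvec (v \<odot> w) I $ i = (subvec v I \<odot> subvec w I) $ i"
    using pick_le by (simp add: subvec_def hadamard_def)
qed (simp add: subvec_def hadamard_def)

lemma submatrix_add:
  assumes "A \<in> carrier_mat p p" and "B \<in> carrier_mat p p" and "I \<subseteq> {..<p}"
  shows "submatrix (A + B) I I = submatrix A I I + submatrix B I I"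
  using assms pick_less[OF assms(3)]
  by (intro eq_matI) (simp_all add: submatrix_def Collect_less_mem_eq)

lemma submatrix_minus:
  assumes "A \<in> carrier_mat p p" and "B \<in> carrier_mat p p" and "I \<subseteq> {..<p}"
  shows "submatrix (A - B) I I = submatrix A I I - submatrix B I I"
  using assms pick_less[OF assms(3)]
  by (intro eq_matI) (simp_all add: submatrix_def Collect_less_mem_eq)

lemma submatrix_smult:
  assumes "A \<in> carrier_mat p p" and "I \<subseteq> {..<p}"
  shows "submatrix (c \<cdot>\<^sub>m A) I I = c \<cdot>\<^sub>m submatrix A I I"
  using assms pick_less[OF assms(2)]
  by (intro eq_matI) (simp_all add: submatrix_def Collect_less_mem_eq)

lemma submatrix_one:
  assumes "I \<subseteq> {..<p}"
  shows "submatrix (1\<^sub>m p) I I = 1\<^sub>m (card I)"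
  using assms pick_less[OF assms] finite_subset[OF assms]
  by (intro eq_matI) (simp_all add: submatrix_def Collect_less_mem_eq pick_eq_pick_iff)

lemma submatrix_mult:
  assumes A: "A \<in> carrier_mat p p" and C: "C \<in> carrier_mat p p" and I: "I \<subseteq> {..<p}"
    and no_leak: "\<And>i j k. i \<in> I \<Longrightarrow> j \<in> I \<Longrightarrow> k < p \<Longrightarrow> k \<notin> I \<Longrightarrow> A $$ (i,k) * C $$ (k,j) = 0"
  shows "submatrix (A * C) I I = submatrix A I I * submatrix C I I"
proof (rule eq_matI)
  have AI: "submatrix A I I \<in> carrier_mat (card I) (card I)" and CI: "submatrix C I I \<in> carrier_mat (card I) (card I)"
    using submatrix_carrier_mat A C I by blast+
  fix i j assume "i < dim_row (submatrix A I I * submatrix C I I)" "j < dim_col (submatrix A I I * submatrix C I I)"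
  then have i: "i < card I" and j: "j < card I" using AI CI by auto
  have "submatrix (A * C) I I $$ (i,j) = (\<Sum>k<p. A $$ (pick I i, k) * C $$ (k, pick I j))"
    using A C I i j pick_less[OF I]
    by (simp add: index_submatrix_pick[of _ p] scalar_prod_def atLeast0LessThan)
  also have "\<dots> = (\<Sum>l<card I. A $$ (pick I i, pick I l) * C $$ (pick I l, pick I j))"
    using I i j pick_in_set by (intro sum_lessThan_eq_sum_pick no_leak) auto
  also have "\<dots> = (submatrix A I I * submatrix C I I) $$ (i,j)"
    using A C I i j AI CI by (simp add: index_submatrix_pick scalar_prod_def atLeast0LessThan)
  finally show "submatrix (A * C) I I $$ (i,j) = (submatrix A I I * submatrix C I I) $$ (i,j)" .
qed (use A C I in \<open>simp_all add: dim_submatrix Collect_less_mem_eq\<close>)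

lemma subvec_mult_mat_vec:
  assumes A: "A \<in> carrier_mat p p" and u: "u \<in> carrier_vec p" and I: "I \<subseteq> {..<p}"
    and no_leak: "\<And>i k. i \<in> I \<Longrightarrow> k < p \<Longrightarrow> k \<notin> I \<Longrightarrow> A $$ (i,k) = 0"
  shows "subvec (A *\<^sub>v u) I = submatrix A I I *\<^sub>v subvec u I"
proof (rule eq_vecI)
  have AI: "submatrix A I I \<in> carrier_mat (card I) (card I)" using submatrix_carrier_mat A I by blast
  have uI: "subvec u I \<in> carrier_vec (card I)" using subvec_carrier_vec u I by blast
  fix i assume "i < dim_vec (submatrix A I I *\<^sub>v subvec u I)"
  then have i: "i < card I" using AI by auto
  have "subvec (A *\<^sub>v u) I $ i = (\<Sum>k<p. A $$ (pick I i, k) * u $ k)"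
    using A u I i pick_less[OF I]
    by (simp add: index_subvec_pick[of _ p] scalar_prod_def atLeast0LessThan)
  also have "\<dots> = (\<Sum>l<card I. A $$ (pick I i, pick I l) * u $ pick I l)"
    using I i pick_in_set by (intro sum_lessThan_eq_sum_pick) (auto simp: no_leak)
  also have "\<dots> = (submatrix A I I *\<^sub>v subvec u I) $ i"
    using A u I i AI uI by (simp add: index_submatrix_pick index_subvec_pick scalar_prod_def atLeast0LessThan)
  finally show "subvec (A *\<^sub>v u) I $ i = (submatrix A I I *\<^sub>v subvec u I) $ i" .
qed (use A u I in \<open>simp add: subvec_def dim_submatrix Collect_less_mem_eq\<close>)

lemma minv_eqI:
  assumes A: "A \<in> carrier_mat m m" and B: "B \<in> carrier_mat m m"
    and AB: "A * B = 1\<^sub>m m" and BA: "B * A = 1\<^sub>m m"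
  shows "minv A = B"
  unfolding minv_def
proof (rule the_equality)
  fix C assume "C \<in> carrier_mat (dim_row A) (dim_row A) \<and> A * C = 1\<^sub>m (dim_row A) \<and> C * A = 1\<^sub>m (dim_row A)"
  then have C: "C \<in> carrier_mat m m" and CA: "C * A = 1\<^sub>m m" using A by auto
  have "C = C * (A * B)" using AB C by simp
  also have "\<dots> = (C * A) * B" using A B C by (simp add: assoc_mult_mat)
  also have "\<dots> = B" using CA B by simp
  finally show "C = B" .
qed (use A B AB BA in simp)

lemma minv_submatrix:
  assumes M: "M \<in> carrier_mat p p" and B: "B \<in> carrier_mat p p"
    and MB: "M * B = 1\<^sub>m p" and BM: "B * M = 1\<^sub>m p" and I: "I \<subseteq> {..<p}"
    and M_no_leak: "\<And>i k. i \<in> I \<Longrightarrow> k < p \<Longrightarrow> k \<notin> I \<Longrightarrow> M $$ (i,k) = 0"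
    and B_no_leak: "\<And>i k. i \<in> I \<Longrightarrow> k < p \<Longrightarrow> k \<notin> I \<Longrightarrow> B $$ (i,k) = 0"
  shows "minv (submatrix M I I) = submatrix B I I"
proof (rule minv_eqI)
  have "submatrix M I I * submatrix B I I = submatrix (M * B) I I"
    by (rule submatrix_mult[OF M B I, symmetric]) (simp add: M_no_leak)
  then show "submatrix M I I * submatrix B I I = 1\<^sub>m (card I)"
    using MB submatrix_one[OF I] by simp
  have "submatrix B I I * submatrix M I I = submatrix (B * M) I I"
    by (rule submatrix_mult[OF B M I, symmetric]) (simp add: B_no_leak)
  then show "submatrix B I I * submatrix M I I = 1\<^sub>m (card I)"
    using BM submatrix_one[OF I] by simp
qed (use submatrix_carrier_mat M B I in blast)+

(* Up to a permutation of coordinates, A = diag(A', c I) with the block c I indexed by Z. *)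
definition scalar_block :: "'a :: zero mat \<Rightarrow> nat set \<Rightarrow> 'a \<Rightarrow> bool" where
  "scalar_block A Z c \<longleftrightarrow>
     (\<forall>i<dim_row A. \<forall>j<dim_col A. i \<in> Z \<or> j \<in> Z \<longrightarrow> A $$ (i,j) = (if i = j then c else 0))"

lemma scalar_block_cross_zero:
  assumes "scalar_block A Z c" and "i < dim_row A" and "k < dim_col A" and "i \<in> Z \<longleftrightarrow> k \<notin> Z"
  shows "A $$ (i,k) = 0"
proof -
  have "i \<noteq> k" and "i \<in> Z \<or> k \<in> Z" using assms(4) by auto
  then show ?thesis using assms(1-3) unfolding scalar_block_def by auto
qed

lemma scalar_block_inverse:
  fixes c :: "'a :: field"
  assumes M: "M \<in> carrier_mat p p" and B: "B \<in> carrier_mat p p"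
    and MB: "M * B = 1\<^sub>m p" and BM: "B * M = 1\<^sub>m p"
    and c: "c \<noteq> 0" and block: "scalar_block M Z c"
  shows "scalar_block B Z (inverse c)"
  unfolding scalar_block_def
proof (intro allI impI)
  fix i j assume i: "i < dim_row B" and j: "j < dim_col B" and ij: "i \<in> Z \<or> j \<in> Z"
  have Mz: "M $$ (a,b) = (if a = b then c else 0)" if "a < p" "b < p" "a \<in> Z \<or> b \<in> Z" for a b
    using block M that unfolding scalar_block_def by auto
  have "c * B $$ (i,j) = (if i = j then 1 else 0)" if "i \<in> Z"
  proof -
    have "(M * B) $$ (i,j) = (\<Sum>k<p. M $$ (i,k) * B $$ (k,j))"
      using M B i j by (simp add: scalar_prod_def atLeast0LessThan)
    also have "\<dots> = (\<Sum>k<p. if k = i then c * B $$ (i,j) else 0)"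
      using M B i that by (intro sum.cong) (auto simp: Mz)
    finally show ?thesis using MB B i j by simp
  qed
  moreover have "B $$ (i,j) * c = (if i = j then 1 else 0)" if "j \<in> Z"
  proof -
    have "(B * M) $$ (i,j) = (\<Sum>k<p. B $$ (i,k) * M $$ (k,j))"
      using M B i j by (simp add: scalar_prod_def atLeast0LessThan)
    also have "\<dots> = (\<Sum>k<p. if k = j then B $$ (i,j) * c else 0)"
      using M B j that by (intro sum.cong) (auto simp: Mz)
    finally show ?thesis using BM B i j by simp
  qed
  ultimately show "B $$ (i,j) = (if i = j then inverse c else 0)"
    using ij c by (auto simp: field_simps)
qed

lemma submatrix_scalar_block:
  fixes A :: "'a :: semiring_1 mat"
  assumes "A \<in> carrier_mat p p" and "Z \<subseteq> {..<p}" and "scalar_block A Z c"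
  shows "submatrix A Z Z = c \<cdot>\<^sub>m 1\<^sub>m (card Z)"
  using assms pick_less[OF assms(2)] pick_in_set[of _ Z] finite_subset[OF assms(2)]
  by (intro eq_matI) (auto simp: submatrix_def Collect_less_mem_eq scalar_block_def pick_eq_pick_iff)

lemma Tmat_eq_mat_diag: "Tmat t = mat_diag (dim_vec t) (\<lambda>i. t $ i)"
  by (rule eq_matI) (simp_all add: Tmat_def mat_diag_def)

lemma Tmat_carrier_mat:
  assumes "t \<in> carrier_vec p"
  shows "Tmat t \<in> carrier_mat p p"
  using carrier_vecD[OF assms] by (simp add: Tmat_def)

lemma transpose_Tmat: "transpose_mat (Tmat t) = Tmat t"
  by (rule eq_matI) (auto simp: Tmat_def)

lemma Tmat_sandwich_index:
  assumes "G \<in> carrier_mat p p" and "t \<in> carrier_vec p" and "i < p" and "j < p"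
  shows "(Tmat t * G * Tmat t) $$ (i,j) = t $ i * G $$ (i,j) * t $ j"
  using assms by (simp add: Tmat_eq_mat_diag mat_diag_mult_left[of _ p p] mat_diag_mult_right[of _ p p])

lemma one_minus_Tmat_square:
  assumes "t \<in> carrier_vec p"
  shows "1\<^sub>m p - Tmat t * Tmat t = mat_diag p (\<lambda>i. 1 - t $ i * t $ i)"
proof -
  have "Tmat t * Tmat t = mat_diag p (\<lambda>i. t $ i * t $ i)"
    using assms by (simp add: Tmat_eq_mat_diag)
  then show ?thesis by (intro eq_matI) (auto simp: mat_diag_def)
qed

lemma mat_diag_mult_vec:
  assumes "v \<in> carrier_vec p"
  shows "mat_diag p f *\<^sub>v v = vec p (\<lambda>i. f i * v $ i)"
proof (rule eq_vecI)
  fix i assume "i < dim_vec (vec p (\<lambda>i. f i * v $ i))"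
  then have i: "i < p" by simp
  have "(mat_diag p f *\<^sub>v v) $ i = (\<Sum>k<p. (if i = k then f k else 0) * v $ k)"
    using assms i by (simp add: mat_diag_def scalar_prod_def atLeast0LessThan)
  also have "\<dots> = (\<Sum>k<p. if k = i then f i * v $ i else 0)"
    by (rule sum.cong) auto
  finally show "(mat_diag p f *\<^sub>v v) $ i = vec p (\<lambda>i. f i * v $ i) $ i"
    using i by simp
qed (simp add: mat_diag_def)

lemma smult_mult_mat_vec:
  fixes A :: "'a :: comm_semiring_0 mat"
  assumes "A \<in> carrier_mat m p" "v \<in> carrier_vec p"
  shows "(c \<cdot>\<^sub>m A) *\<^sub>v v = c \<cdot>\<^sub>v (A *\<^sub>v v)"
  using assms by (intro eq_vecI) (auto simp: smult_scalar_prod_distrib[of _ p])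

lemma Zset_subset: "t \<in> carrier_vec p \<Longrightarrow> Zset t \<subseteq> {..<p}"
  by (auto simp: Zset_def)

lemma Pset_eq: "t \<in> carrier_vec p \<Longrightarrow> Pset t = {..<p} - Zset t"
  by (auto simp: Pset_def Zset_def)

lemma subvec_Zset:
  assumes t: "t \<in> carrier_vec p"
  shows "subvec t (Zset t) = 0\<^sub>v (card (Zset t))"
  using t pick_in_set[of _ "Zset t"] finite_subset[OF Zset_subset[OF t]]
  by (intro eq_vecI) (auto simp: subvec_def Collect_less_mem_eq[OF Zset_subset[OF t]] Zset_def)

context
  fixes X :: "real mat" and t :: "real vec" and n p :: nat
  assumes X: "X \<in> carrier_mat n p" and t: "t \<in> carrier_vec p"
begin

lemma Xmat_carrier_mat: "Xmat X t \<in> carrier_mat n p"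
  unfolding Xmat_def using X Tmat_carrier_mat[OF t] by (rule mult_carrier_mat)

lemma transpose_Xmat: "transpose_mat (Xmat X t) = Tmat t * transpose_mat X"
  using X Tmat_carrier_mat[OF t] by (simp add: Xmat_def transpose_mult transpose_Tmat)

lemma Lmat_carrier_mat: "Lmat X \<delta> t \<in> carrier_mat p p"
  unfolding Lmat_def using Tmat_carrier_mat[OF t]
  by (intro smult_carrier_mat add_carrier_mat minus_carrier_mat mult_carrier_mat)

lemma Lmat_eq:
  "Lmat X \<delta> t = (1 / real n) \<cdot>\<^sub>m
     (Tmat t * (transpose_mat X * X) * Tmat t + \<delta> \<cdot>\<^sub>m (1\<^sub>m p - Tmat t * Tmat t))"
proof -
  have T: "Tmat t \<in> carrier_mat p p" using Tmat_carrier_mat[OF t] .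
  have "transpose_mat (Xmat X t) * Xmat X t = Tmat t * transpose_mat X * (X * Tmat t)"
    unfolding transpose_Xmat by (simp add: Xmat_def)
  also have "\<dots> = Tmat t * (transpose_mat X * X) * Tmat t"
    using X T by (simp add: assoc_mult_mat[of _ p n _ p _ p] assoc_mult_mat[of _ p p _ n _ p] assoc_mult_mat[of _ p p _ p _ p])
  finally show ?thesis using X t by (simp add: Lmat_def)
qed

lemma scalar_block_Lmat: "scalar_block (Lmat X \<delta> t) (Zset t) (\<delta> / real n)"
  unfolding scalar_block_def
proof (intro allI impI)
  fix i j assume "i < dim_row (Lmat X \<delta> t)" "j < dim_col (Lmat X \<delta> t)" and ij: "i \<in> Zset t \<or> j \<in> Zset t"
  then have "i < p" "j < p" using carrier_matD[OF Lmat_carrier_mat[of \<delta>]] by simp_all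
  moreover have "t $ i = 0 \<or> t $ j = 0" using ij by (auto simp: Zset_def)
  ultimately show "Lmat X \<delta> t $$ (i,j) = (if i = j then \<delta> / real n else 0)"
    using X t by (auto simp: Lmat_eq Tmat_sandwich_index[of _ p] one_minus_Tmat_square mat_diag_def)
qed

lemma submatrix_Lmat:
  assumes I: "I \<subseteq> {..<p}"
  shows "submatrix (Lmat X \<delta> t) I I = (1 / real n) \<cdot>\<^sub>m
     (submatrix (Tmat t) I I * submatrix (transpose_mat X * X) I I * submatrix (Tmat t) I I
      + \<delta> \<cdot>\<^sub>m (1\<^sub>m (card I) - submatrix (Tmat t) I I * submatrix (Tmat t) I I))"
proof -
  let ?T = "Tmat t" and ?G = "transpose_mat X * X"
  have T: "?T \<in> carrier_mat p p" using Tmat_carrier_mat[OF t] .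
  have G: "?G \<in> carrier_mat p p" using X by simp
  have T_diag: "?T $$ (a,b) = 0" if "a < p" "b < p" "a \<noteq> b" for a b
    using that t by (simp add: Tmat_def)
  have no_leak_left: "?T $$ (i,k) * A $$ (k,j) = 0" and no_leak_right: "A $$ (i,k) * ?T $$ (k,j) = 0"
    if "i \<in> I" "j \<in> I" "k < p" "k \<notin> I" for A i j k
    using that I T_diag by auto
  have TG: "?T * ?G \<in> carrier_mat p p" and TT: "?T * ?T \<in> carrier_mat p p"
    using T G by simp_all
  have D: "1\<^sub>m p - ?T * ?T \<in> carrier_mat p p" using TT by (rule minus_carrier_mat)
  have "submatrix (?T * ?G * ?T) I I = submatrix (?T * ?G) I I * submatrix ?T I I"
    by (rule submatrix_mult[OF TG T I]) (rule no_leak_right)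
  also have "submatrix (?T * ?G) I I = submatrix ?T I I * submatrix ?G I I"
    by (rule submatrix_mult[OF T G I]) (rule no_leak_left)
  finally have TGT: "submatrix (?T * ?G * ?T) I I = submatrix ?T I I * submatrix ?G I I * submatrix ?T I I" .
  have "submatrix (?T * ?T) I I = submatrix ?T I I * submatrix ?T I I"
    by (rule submatrix_mult[OF T T I]) (rule no_leak_left)
  then have "submatrix (1\<^sub>m p - ?T * ?T) I I = 1\<^sub>m (card I) - submatrix ?T I I * submatrix ?T I I"
    by (simp only: submatrix_minus[OF one_carrier_mat TT I] submatrix_one[OF I])
  then show ?thesis
    unfolding Lmat_eq submatrix_smult[OF add_carrier_mat[OF smult_carrier_mat[OF D]] I]
      submatrix_add[OF mult_carrier_mat[OF TG T] smult_carrier_mat[OF D] I] submatrix_smult[OF D I] TGT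
    by simp
qed

lemma Xmat_transpose_mult_vec:
  assumes y: "y \<in> carrier_vec n"
  shows "transpose_mat (Xmat X t) *\<^sub>v y = t \<odot> (transpose_mat X *\<^sub>v y)"
proof -
  have "transpose_mat (Xmat X t) *\<^sub>v y = Tmat t *\<^sub>v (transpose_mat X *\<^sub>v y)"
    unfolding transpose_Xmat using X y Tmat_carrier_mat[OF t] by (simp add: assoc_mult_mat_vec[of _ p p _ n])
  also have "\<dots> = t \<odot> (transpose_mat X *\<^sub>v y)"
    using X y carrier_vecD[OF t] by (simp add: Tmat_eq_mat_diag mat_diag_mult_vec[of _ p] hadamard_def)
  finally show ?thesis .
qed

lemma scalar_prod_Lmat:
  assumes v: "v \<in> carrier_vec p"
  shows "v \<bullet> (Lmat X \<delta> t *\<^sub>v v) =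
    (1 / real n) * ((Xmat X t *\<^sub>v v) \<bullet> (Xmat X t *\<^sub>v v) + \<delta> * (\<Sum>i<p. (1 - t $ i * t $ i) * (v $ i)\<^sup>2))"
proof -
  let ?A = "Xmat X t"
  have A: "?A \<in> carrier_mat n p" by (rule Xmat_carrier_mat)
  have Lv: "Lmat X \<delta> t *\<^sub>v v = (1 / real n) \<cdot>\<^sub>v (transpose_mat ?A *\<^sub>v (?A *\<^sub>v v) + \<delta> \<cdot>\<^sub>v vec p (\<lambda>i. (1 - t $ i * t $ i) * v $ i))"
    using X t v A unfolding Lmat_def
    by (simp add: one_minus_Tmat_square smult_mult_mat_vec[of _ p p] add_mult_distrib_mat_vec[of _ p p] mat_diag_mult_vec)
  have "v \<bullet> (transpose_mat ?A *\<^sub>v (?A *\<^sub>v v)) = (?A *\<^sub>v v) \<bullet> (?A *\<^sub>v v)"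
    using A v by (metis comm_scalar_prod mult_mat_vec_carrier transpose_carrier_mat transpose_vec_mult_scalar)
  moreover have "v \<bullet> vec p (\<lambda>i. (1 - t $ i * t $ i) * v $ i) = (\<Sum>i<p. (1 - t $ i * t $ i) * (v $ i)\<^sup>2)"
    using v by (auto simp: scalar_prod_def atLeast0LessThan power2_eq_square mult_ac intro: sum.cong)
  ultimately show ?thesis
    using A v by (simp add: Lv scalar_prod_add_distrib[of _ p])
qed

lemma betat_eq:
  assumes y: "y \<in> carrier_vec n"
  shows "betat X y \<delta> t = minv (Lmat X \<delta> t) *\<^sub>v (t \<odot> ((1 / real n) \<cdot>\<^sub>v (transpose_mat X *\<^sub>v y)))"
proof -
  have "(1 / real n) \<cdot>\<^sub>v (t \<odot> (transpose_mat X *\<^sub>v y)) = t \<odot> ((1 / real n) \<cdot>\<^sub>v (transpose_mat X *\<^sub>v y))"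
    using X t by (intro eq_vecI) (simp_all add: hadamard_def)
  then show ?thesis
    using X by (simp add: betat_def Xmat_transpose_mult_vec[OF y])
qed

lemma avec_carrier_vec: "y \<in> carrier_vec n \<Longrightarrow> avec X y \<delta> t \<in> carrier_vec p"
  using X by (intro carrier_vecI) (simp add: avec_def)

context
  fixes \<delta> :: real
  assumes n_pos: "n > 0" and \<delta>_pos: "\<delta> > 0" and t_bounds: "\<forall>j<p. 0 \<le> t $ j \<and> t $ j < 1"
begin

lemma Lmat_mult_vec_zero_imp_zero:
  assumes v: "v \<in> carrier_vec p" and Lv: "Lmat X \<delta> t *\<^sub>v v = 0\<^sub>v p"
  shows "v = 0\<^sub>v p"
proof -
  let ?w = "Xmat X t *\<^sub>v v"
  have weight_pos: "0 < 1 - t $ i * t $ i" if "i < p" for i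
  proof -
    have "0 \<le> t $ i" "t $ i < 1" using t_bounds that by auto
    then show ?thesis using mult_left_le[of "t $ i" "t $ i"] by linarith
  qed
  define S where "S = (\<Sum>i<p. (1 - t $ i * t $ i) * (v $ i)\<^sup>2)"
  have "0 \<le> ?w \<bullet> ?w" by (simp add: scalar_prod_def sum_nonneg)
  moreover have S_nonneg: "0 \<le> S"
    unfolding S_def using weight_pos by (intro sum_nonneg) (simp add: less_imp_le)
  moreover have "?w \<bullet> ?w + \<delta> * S = 0"
    using scalar_prod_Lmat[OF v, of \<delta>] Lv v n_pos by (simp add: S_def)
  ultimately have "S = 0"
    using \<delta>_pos by (smt (verit) mult_pos_pos mult_nonneg_nonneg)
  then have term_zero: "(1 - t $ i * t $ i) * (v $ i)\<^sup>2 = 0" if "i < p" for i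
    using that weight_pos unfolding S_def by (subst (asm) sum_nonneg_eq_0_iff) (auto simp: less_imp_le)
  have "v $ i = 0" if "i < p" for i
    using term_zero[OF that] weight_pos[OF that] by simp
  then show ?thesis
    using v by (intro eq_vecI) auto
qed

lemma Lmat_inverse:
  shows "minv (Lmat X \<delta> t) \<in> carrier_mat p p"
    and "Lmat X \<delta> t * minv (Lmat X \<delta> t) = 1\<^sub>m p"
    and "minv (Lmat X \<delta> t) * Lmat X \<delta> t = 1\<^sub>m p"
proof -
  let ?L = "Lmat X \<delta> t"
  have "det ?L \<noteq> 0"
    using det_0_iff_vec_prod_zero[OF Lmat_carrier_mat] Lmat_mult_vec_zero_imp_zero by blast
  then have "?L \<in> Units (ring_mat TYPE(real) p ())"
    by (rule det_non_zero_imp_unit[OF Lmat_carrier_mat])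
  then obtain B where B: "B \<in> carrier_mat p p" "B * ?L = 1\<^sub>m p" "?L * B = 1\<^sub>m p"
    unfolding Units_def ring_mat_def by auto
  moreover have "minv ?L = B" by (rule minv_eqI[OF Lmat_carrier_mat B(1,3,2)])
  ultimately show "minv ?L \<in> carrier_mat p p" "?L * minv ?L = 1\<^sub>m p" "minv ?L * ?L = 1\<^sub>m p"
    by simp_all
qed

lemma scalar_block_minv_Lmat: "scalar_block (minv (Lmat X \<delta> t)) (Zset t) (real n / \<delta>)"
proof -
  have "\<delta> / real n \<noteq> 0" using n_pos \<delta>_pos by simp
  from scalar_block_inverse[OF Lmat_carrier_mat Lmat_inverse this scalar_block_Lmat]
  show ?thesis by simp
qed

lemma minv_Lmat_blocks:
  shows "submatrix (minv (Lmat X \<delta> t)) (Zset t) (Zset t) = (real n / \<delta>) \<cdot>\<^sub>m 1\<^sub>m (card (Zset t))"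
    and "submatrix (minv (Lmat X \<delta> t)) (Pset t) (Pset t) = minv (submatrix (Lmat X \<delta> t) (Pset t) (Pset t))"
proof -
  let ?L = "Lmat X \<delta> t"
  show "submatrix (minv ?L) (Zset t) (Zset t) = (real n / \<delta>) \<cdot>\<^sub>m 1\<^sub>m (card (Zset t))"
    by (rule submatrix_scalar_block[OF Lmat_inverse(1) Zset_subset[OF t] scalar_block_minv_Lmat])
  have P: "Pset t \<subseteq> {..<p}" by (auto simp: Pset_eq[OF t])
  have "minv (submatrix ?L (Pset t) (Pset t)) = submatrix (minv ?L) (Pset t) (Pset t)"
  proof (rule minv_submatrix[OF Lmat_carrier_mat Lmat_inverse P])
    fix i k assume "i \<in> Pset t" "k < p" "k \<notin> Pset t"
    then have "i < p" "i \<in> Zset t \<longleftrightarrow> k \<notin> Zset t" by (auto simp: Pset_eq[OF t])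
    with \<open>k < p\<close> show "?L $$ (i,k) = 0" "minv ?L $$ (i,k) = 0"
      using scalar_block_cross_zero[OF scalar_block_Lmat] scalar_block_cross_zero[OF scalar_block_minv_Lmat]
        carrier_matD[OF Lmat_carrier_mat[of \<delta>]] carrier_matD[OF Lmat_inverse(1)] by simp_all
  qed
  then show "submatrix (minv ?L) (Pset t) (Pset t) = minv (submatrix ?L (Pset t) (Pset t))" ..
qed

lemma subvec_minv_Lmat_mult_hadamard:
  assumes w: "w \<in> carrier_vec p"
  shows "subvec (minv (Lmat X \<delta> t) *\<^sub>v (t \<odot> w)) (Zset t) = 0\<^sub>v (card (Zset t))"
    and "subvec (minv (Lmat X \<delta> t) *\<^sub>v (t \<odot> w)) (Pset t) =
      minv (submatrix (Lmat X \<delta> t) (Pset t) (Pset t)) *\<^sub>v (subvec t (Pset t) \<odot> subvec w (Pset t))"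
proof -
  let ?B = "minv (Lmat X \<delta> t)"
  have tw: "t \<odot> w \<in> carrier_vec p" using carrier_vecD[OF t] by (intro carrier_vecI) (simp add: hadamard_def)
  have dims: "dim_vec w = dim_vec t" using t w by simp
  have B_no_leak: "?B $$ (i,k) = 0" if "i < p" "k < p" "i \<in> Zset t \<longleftrightarrow> k \<notin> Zset t" for i k
    using scalar_block_cross_zero[OF scalar_block_minv_Lmat] carrier_matD[OF Lmat_inverse(1)] that by simp
  have "subvec (?B *\<^sub>v (t \<odot> w)) (Zset t) = submatrix ?B (Zset t) (Zset t) *\<^sub>v subvec (t \<odot> w) (Zset t)"
    using Zset_subset[OF t] by (intro subvec_mult_mat_vec[OF Lmat_inverse(1) tw Zset_subset[OF t]] B_no_leak) auto
  also have "subvec (t \<odot> w) (Zset t) = 0\<^sub>v (card (Zset t))"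
    unfolding subvec_hadamard[OF dims] subvec_Zset[OF t] by (intro eq_vecI) (simp_all add: hadamard_def)
  also have "submatrix ?B (Zset t) (Zset t) = (real n / \<delta>) \<cdot>\<^sub>m 1\<^sub>m (card (Zset t))"
    by (rule minv_Lmat_blocks(1))
  finally show "subvec (?B *\<^sub>v (t \<odot> w)) (Zset t) = 0\<^sub>v (card (Zset t))"
    by (auto simp: smult_mult_mat_vec[of "1\<^sub>m (card (Zset t))" "card (Zset t)" "card (Zset t)"] intro: eq_vecI)
  have P: "Pset t \<subseteq> {..<p}" by (auto simp: Pset_eq[OF t])
  have "subvec (?B *\<^sub>v (t \<odot> w)) (Pset t) = submatrix ?B (Pset t) (Pset t) *\<^sub>v subvec (t \<odot> w) (Pset t)"
    using P by (intro subvec_mult_mat_vec[OF Lmat_inverse(1) tw P] B_no_leak) (auto simp: Pset_eq[OF t])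
  then show "subvec (?B *\<^sub>v (t \<odot> w)) (Pset t) =
      minv (submatrix (Lmat X \<delta> t) (Pset t) (Pset t)) *\<^sub>v (subvec t (Pset t) \<odot> subvec w (Pset t))"
    by (simp add: minv_Lmat_blocks(2) subvec_hadamard[OF dims])
qed

end

end

theorem theorem6:
  fixes n p :: nat and X :: "real mat" and y t :: "real vec" and \<delta> :: real
  assumes "n > 0" and "p > 0"
    and "X \<in> carrier_mat n p" and "y \<in> carrier_vec n" and "\<delta> > 0"
    and "t \<in> carrier_vec p" and "\<forall>j<p. 0 \<le> t $ j \<and> t $ j < 1"
  shows "(submatrix (Lmat X \<delta> t) (Pset t) (Pset t) =
           (1 / real n) \<cdot>\<^sub>m
             (submatrix (Tmat t) (Pset t) (Pset t) * submatrix (transpose_mat X * X) (Pset t) (Pset t)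
                * submatrix (Tmat t) (Pset t) (Pset t)
              + \<delta> \<cdot>\<^sub>m (1\<^sub>m (card (Pset t))
                   - submatrix (Tmat t) (Pset t) (Pset t) * submatrix (Tmat t) (Pset t) (Pset t)))
    \<and> submatrix (minv (Lmat X \<delta> t)) (Zset t) (Zset t) = (real n / \<delta>) \<cdot>\<^sub>m 1\<^sub>m (card (Zset t))
    \<and> submatrix (minv (Lmat X \<delta> t)) (Pset t) (Pset t) = minv (submatrix (Lmat X \<delta> t) (Pset t) (Pset t))
    \<and> subvec (betat X y \<delta> t) (Zset t) = 0\<^sub>v (card (Zset t))
    \<and> subvec (betat X y \<delta> t) (Pset t) =
           minv (submatrix (Lmat X \<delta> t) (Pset t) (Pset t)) *\<^sub>v
             (subvec t (Pset t) \<odot> subvec ((1 / real n) \<cdot>\<^sub>v (transpose_mat X *\<^sub>v y)) (Pset t))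
    \<and> subvec (cvec X y \<delta> t) (Zset t) = 0\<^sub>v (card (Zset t))
    \<and> subvec (cvec X y \<delta> t) (Pset t) =
           minv (submatrix (Lmat X \<delta> t) (Pset t) (Pset t)) *\<^sub>v
             (subvec t (Pset t) \<odot> subvec (avec X y \<delta> t) (Pset t)))"
proof -
  note X = assms(3) and y = assms(4) and t = assms(6)
  note posdef_hyps = assms(1,5,7)
  have P: "Pset t \<subseteq> {..<p}" using Pset_eq[OF t] by auto
  have "(1 / real n) \<cdot>\<^sub>v (transpose_mat X *\<^sub>v y) \<in> carrier_vec p" using X y by simp
  note beta_blocks = subvec_minv_Lmat_mult_hadamard[OF X t posdef_hyps this]
  note c_blocks = subvec_minv_Lmat_mult_hadamard[OF X t posdef_hyps avec_carrier_vec[OF X t y, where \<delta> = \<delta>]]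
  show ?thesis
    unfolding betat_eq[OF X t y] cvec_def
    using submatrix_Lmat[OF X t P] minv_Lmat_blocks[OF X t posdef_hyps] beta_blocks c_blocks
    by (intro conjI) blast+
qed

end
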